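(* Let $p$ be a prime, $n \in \mathbb{N}$, $v \in \mathbb{Z}_p^n$, and let $t \le 2^{-7} n$. If $S \subset T_t(v)$, then $$\big| \{ i \in [n] : v_i \notin C(S) \} \big| \le \frac{n}{4}.$$
   Context: For $x, y \in \mathbb{Z}_p$, the product $x \cdot y \in \mathbb{Z}$ is obtained by identifying $x,y$ with their representatives in $\{0,1,\ldots,p-1\}$ and multiplying in $\mathbb{Z}$. For real $x$, $\|x\|$ denotes the distance from $x$ to the nearest integer. For $v \in \mathbb{Z}_p^n$ and $t \ge 0$, the level set is $$T_t(v) := \Big\{ k \in \mathbb{Z}_p : \sum_{i=1}^n \Big\| \frac{k \cdot v_i}{p} \Big\|^2 \le t \Big\}.$$ For $S \subset \mathbb{Z}_p$, $$C(S) := \Big\{ a \in \mathbb{Z}_p : \sum_{k \in S} \Big\| \frac{a \cdot k}{p} \Big\|^2 \le \frac{|S|}{2^5} \Big\}.$$ *)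

theory Defs
  imports "HOL-Analysis.Analysis"
begin

text \<open>Elements of Z_p are represented by their canonical representatives in {0..<p}.
  A vector v in Z_p^n is a function on the index set {1..n} with values in {0..<p}.\<close>

definition dist_int :: "real \<Rightarrow> real" where
  "dist_int x = \<bar>x - of_int (round x)\<bar>"

definition level_set :: "nat \<Rightarrow> nat \<Rightarrow> (nat \<Rightarrow> nat) \<Rightarrow> real \<Rightarrow> nat set" where
  "level_set p n v t =
     {k \<in> {0..<p}. (\<Sum>i\<in>{1..n}. (dist_int (real (k * v i) / real p))\<^sup>2) \<le> t}"

definition C_set :: "nat \<Rightarrow> nat set \<Rightarrow> nat set" where
  "C_set p S =
     {a \<in> {0..<p}. (\<Sum>k\<in>S. (dist_int (real (a * k) / real p))\<^sup>2) \<le> real (card S) / 2 ^ 5}"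

end

theory Submission
  imports Defs
begin

text \<open>Double counting: if each of the frequencies k in S has squared distances summing to at most t
  over all indices, then the total mass over S \<times> {1..n} is at most |S| t, while every index with
  v_i outside C(S) carries mass more than |S|/2^5 on its own. Hence there are at most 2^5 t \<le> n/4
  such indices.\<close>

lemma card_heavy_columns_le:
  fixes f :: "'a \<Rightarrow> 'b \<Rightarrow> real" and c t :: real
  assumes "finite S" and "finite I" and "c > 0" and "t \<ge> 0"
    and nonneg: "\<And>k i. k \<in> S \<Longrightarrow> i \<in> I \<Longrightarrow> f k i \<ge> 0"
    and row_bound: "\<And>k. k \<in> S \<Longrightarrow> (\<Sum>i\<in>I. f k i) \<le> t"
  shows "c * real (card {i \<in> I. real (card S) * c < (\<Sum>k\<in>S. f k i)}) \<le> t"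
proof (cases "S = {}")
  case True
  then show ?thesis using \<open>t \<ge> 0\<close> by simp
next
  case False
  define H where "H = {i \<in> I. real (card S) * c < (\<Sum>k\<in>S. f k i)}"
  have "real (card S) * (c * real (card H)) = (\<Sum>i\<in>H. real (card S) * c)"
    by simp
  also have "\<dots> \<le> (\<Sum>i\<in>H. \<Sum>k\<in>S. f k i)"
    by (rule sum_mono) (simp add: H_def)
  also have "\<dots> = (\<Sum>k\<in>S. \<Sum>i\<in>H. f k i)"
    by (rule sum.swap)
  also have "\<dots> \<le> (\<Sum>k\<in>S. \<Sum>i\<in>I. f k i)"
    by (intro sum_mono sum_mono2) (auto simp: H_def \<open>finite I\<close> nonneg)
  also have "\<dots> \<le> real (card S) * t"
    using sum_mono[of S "\<lambda>k. \<Sum>i\<in>I. f k i" "\<lambda>_. t"] row_bound by simp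
  finally show ?thesis
    using False \<open>finite S\<close> by (simp add: H_def mult_le_cancel_left card_gt_0_iff)
qed

theorem lemma3p1:
  fixes p n :: nat and v :: "nat \<Rightarrow> nat" and t :: real and S :: "nat set"
  assumes "prime p"
    and "\<forall>i\<in>{1..n}. v i < p"
    and "0 \<le> t"
    and "t \<le> real n / 2 ^ 7"
    and "S \<subseteq> level_set p n v t"
  shows "real (card {i \<in> {1..n}. v i \<notin> C_set p S}) \<le> real n / 4"
proof -
  define f where "f k i = (dist_int (real (k * v i) / real p))\<^sup>2" for k i
  have "S \<subseteq> {0..<p}"
    using assms(5) unfolding level_set_def by auto
  then have "finite S"
    using finite_subset by blast
  have outside_C_iff_heavy:
    "{i \<in> {1..n}. v i \<notin> C_set p S} = {i \<in> {1..n}. real (card S) * (1 / 2 ^ 5) < (\<Sum>k\<in>S. f k i)}"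
    using assms(2) by (auto simp: C_set_def f_def mult.commute)
  have "1 / 2 ^ 5 * real (card {i \<in> {1..n}. v i \<notin> C_set p S}) \<le> t"
    unfolding outside_C_iff_heavy
  proof (rule card_heavy_columns_le)
    show "(\<Sum>i\<in>{1..n}. f k i) \<le> t" if "k \<in> S" for k
      using that assms(5) unfolding level_set_def f_def by auto
  qed (use \<open>finite S\<close> \<open>0 \<le> t\<close> in \<open>auto simp: f_def\<close>)
  then show ?thesis
    using assms(4) by simp
qed

end
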